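(* The set $\overline{P_2}$ of reduced words over $\{a,b,a^{-1},b^{-1}\}$ representing primitive elements of $F_2$ is not a context-free language.
   Context: $F_2$ is the free group on $\{a,b\}$; an element is primitive if it belongs to some basis of $F_2$. A word is reduced if it has no factor $xx^{-1}$ with $x\in\{a,b,a^{-1},b^{-1}\}$. *)

theory Defs
  imports Main
begin

datatype letter = Ga | Gb | GaInv | GbInv

fun inv_letter :: "letter \<Rightarrow> letter" where
  "inv_letter Ga = GaInv"
| "inv_letter Gb = GbInv"
| "inv_letter GaInv = Ga"
| "inv_letter GbInv = Gb"

definition reduced :: "letter list \<Rightarrow> bool" where
  "reduced w \<longleftrightarrow> \<not> (\<exists>u v x. w = u @ [x, inv_letter x] @ v)"

fun red_cons :: "letter \<Rightarrow> letter list \<Rightarrow> letter list" where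
  "red_cons x [] = [x]"
| "red_cons x (y # ys) = (if y = inv_letter x then ys else x # y # ys)"

definition reduce :: "letter list \<Rightarrow> letter list" where
  "reduce w = foldr red_cons w []"

text \<open>Elements of F_2 are represented by reduced words; the inverse of a word.\<close>
definition inv_word :: "letter list \<Rightarrow> letter list" where
  "inv_word w = rev (map inv_letter w)"

fun img :: "letter list \<Rightarrow> letter list \<Rightarrow> letter \<Rightarrow> letter list" where
  "img u v Ga = u"
| "img u v Gb = v"
| "img u v GaInv = inv_word u"
| "img u v GbInv = inv_word v"

definition endo :: "letter list \<Rightarrow> letter list \<Rightarrow> letter list \<Rightarrow> letter list" where
  "endo u v w = reduce (concat (map (img u v) w))"

text \<open>(u, v) is a basis of F_2 iff the endomorphism a \<mapsto> u, b \<mapsto> v is an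
  automorphism, i.e. bijective on F_2 (= reduced words).\<close>
definition is_basis :: "letter list \<Rightarrow> letter list \<Rightarrow> bool" where
  "is_basis u v \<longleftrightarrow> reduced u \<and> reduced v \<and>
     bij_betw (endo u v) {w. reduced w} {w. reduced w}"

definition primitive :: "letter list \<Rightarrow> bool" where
  "primitive w \<longleftrightarrow> (\<exists>v. is_basis w v \<or> is_basis v w)"

definition primitive_reduced_words :: "letter list set" where
  "primitive_reduced_words = {w. reduced w \<and> primitive w}"

text \<open>A grammar: a set of productions (A, alpha) with nonterminals nat and
  sentential forms over nonterminals (Inl) and terminals (Inr).\<close>
definition cfg_step :: "(nat \<times> (nat + 'a) list) set \<Rightarrow> (nat + 'a) list \<Rightarrow> (nat + 'a) list \<Rightarrow> bool" where
  "cfg_step P x y \<longleftrightarrow> (\<exists>l r A \<alpha>. x = l @ [Inl A] @ r \<and> (A, \<alpha>) \<in> P \<and> y = l @ \<alpha> @ r)"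

definition cfg_lang :: "(nat \<times> (nat + 'a) list) set \<Rightarrow> nat \<Rightarrow> 'a list set" where
  "cfg_lang P S = {w. (cfg_step P)\<^sup>*\<^sup>* [Inl S] (map Inr w)}"

definition context_free :: "'a list set \<Rightarrow> bool" where
  "context_free L \<longleftrightarrow> (\<exists>P S. finite P \<and> L = cfg_lang P S)"

end

theory Submission
  imports Defs "HOL-Number_Theory.Number_Theory"
begin

text \<open>Abelianizing F_2, the exponent sums of a primitive element are coprime, because an
  automorphism induces an integer matrix with an integer inverse. For a prime q exceeding the
  pumping constant, the positive word (a^q b)^q a is primitive (its partner is a^q b), and its
  exponent sums are (q^2 + 1, q). A pumping window shorter than q contains at most one b, so
  pumping changes the exponent sums by multiples j(\<alpha>, \<beta>) with \<beta> \<in> {0, 1}; a suitable j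
  gives both sums a common factor (q if \<beta> = 0, and q + j if \<beta> = 1), contradicting primitivity.\<close>

section \<open>Free reduction\<close>

lemma inv_letter_inv_letter [simp]: "inv_letter (inv_letter x) = x"
  by (cases x) auto

lemma reduced_Nil [simp]: "reduced []"
  unfolding reduced_def by auto

lemma reduced_Cons: "reduced (x # w) \<longleftrightarrow> reduced w \<and> (w = [] \<or> hd w \<noteq> inv_letter x)"
proof
  assume r: "reduced (x # w)"
  have "reduced w"
    unfolding reduced_def
  proof
    assume "\<exists>u v y. w = u @ [y, inv_letter y] @ v"
    then obtain u v y where "x # w = (x # u) @ [y, inv_letter y] @ v" by auto
    then show False using r unfolding reduced_def by blast
  qed
  moreover have "w = [] \<or> hd w \<noteq> inv_letter x"
  proof (rule ccontr)
    assume "\<not> (w = [] \<or> hd w \<noteq> inv_letter x)"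
    then obtain w' where "x # w = [] @ [x, inv_letter x] @ w'" by (cases w) auto
    then show False using r unfolding reduced_def by blast
  qed
  ultimately show "reduced w \<and> (w = [] \<or> hd w \<noteq> inv_letter x)" by blast
next
  assume h: "reduced w \<and> (w = [] \<or> hd w \<noteq> inv_letter x)"
  show "reduced (x # w)" unfolding reduced_def
  proof
    assume "\<exists>u v y. x # w = u @ [y, inv_letter y] @ v"
    then obtain u v y where e: "x # w = u @ [y, inv_letter y] @ v" by blast
    show False
    proof (cases u)
      case Nil
      then show False using e h by auto
    next
      case Cons
      then show False using e h unfolding reduced_def by auto
    qed
  qed
qed

lemma reduced_red_cons: "reduced w \<Longrightarrow> reduced (red_cons x w)"
  by (cases w) (auto simp: reduced_Cons)

lemma reduced_foldr_red_cons: "reduced r \<Longrightarrow> reduced (foldr red_cons s r)"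
  by (induction s) (auto intro: reduced_red_cons)

lemma reduced_reduce [simp]: "reduced (reduce w)"
  unfolding reduce_def by (rule reduced_foldr_red_cons) simp

lemma reduce_Nil [simp]: "reduce [] = []"
  by (simp add: reduce_def)

lemma reduce_Cons: "reduce (x # w) = red_cons x (reduce w)"
  by (simp add: reduce_def)

lemma reduce_append: "reduce (s @ r) = foldr red_cons s (reduce r)"
  by (simp add: reduce_def)

lemma reduce_reduced: "reduced w \<Longrightarrow> reduce w = w"
proof (induction w)
  case (Cons x w)
  then have "reduced w" and "w = [] \<or> hd w \<noteq> inv_letter x"
    by (auto simp: reduced_Cons)
  with Cons.IH show ?case
    by (cases w) (auto simp: reduce_Cons)
qed simp

lemma reduce_reduce [simp]: "reduce (reduce w) = reduce w"
  by (simp add: reduce_reduced)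

lemma reduce_singleton [simp]: "reduce [x] = [x]"
  by (simp add: reduce_reduced reduced_Cons)

lemma red_cons_cancel: "reduced t \<Longrightarrow> red_cons x (red_cons (inv_letter x) t) = t"
  by (cases t rule: list.exhaust[case_product list.exhaust[of "tl t"]])
    (auto simp: reduced_Cons)

lemma red_cons_foldr:
  assumes "reduced r"
  shows "red_cons x (foldr red_cons s r) = foldr red_cons (red_cons x s) r"
proof (cases s)
  case (Cons y s')
  then show ?thesis
    using red_cons_cancel[OF reduced_foldr_red_cons[OF assms], of "inv_letter y" s'] by auto
qed simp

lemma foldr_red_cons_reduce: "reduced r \<Longrightarrow> foldr red_cons s r = foldr red_cons (reduce s) r"
  by (induction s) (simp_all add: reduce_Cons red_cons_foldr reduce_def)

lemma reduce_append_left: "reduce (s @ r) = reduce (reduce s @ r)"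
  by (simp add: reduce_append foldr_red_cons_reduce[of "reduce r" s])

lemma reduce_append_right: "reduce (s @ r) = reduce (s @ reduce r)"
  by (simp add: reduce_append)

lemma reduce_append_cong:
  "reduce a = reduce a' \<Longrightarrow> reduce b = reduce b' \<Longrightarrow> reduce (a @ b) = reduce (a' @ b')"
  by (metis reduce_append_left reduce_append_right)

lemma inv_word_Nil [simp]: "inv_word [] = []"
  by (simp add: inv_word_def)

lemma inv_word_singleton [simp]: "inv_word [x] = [inv_letter x]"
  by (simp add: inv_word_def)

lemma inv_word_Cons: "inv_word (x # w) = inv_word w @ [inv_letter x]"
  by (simp add: inv_word_def)

lemma inv_word_append: "inv_word (a @ b) = inv_word b @ inv_word a"
  by (simp add: inv_word_def)

lemma inv_word_inv_word [simp]: "inv_word (inv_word w) = w"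
  by (simp add: inv_word_def rev_map comp_def)

lemma reduce_inv_word_append_self: "reduce (inv_word s @ s) = []"
proof (induction s)
  case (Cons x s)
  have "reduce (inv_word (x # s) @ x # s)
      = foldr red_cons (inv_word s) (red_cons (inv_letter x) (red_cons x (reduce s)))"
    by (simp add: inv_word_Cons reduce_append reduce_Cons)
  also have "\<dots> = reduce (inv_word s @ s)"
    using red_cons_cancel[of "reduce s" "inv_letter x"] by (simp add: reduce_append)
  finally show ?case using Cons.IH by simp
qed simp

lemma reduce_append_inv_word_self: "reduce (s @ inv_word s) = []"
  using reduce_inv_word_append_self[of "inv_word s"] by simp

lemma reduce_cancel: "reduce (s @ inv_word s @ r) = reduce r"
  by (metis append.assoc append_Nil reduce_append_inv_word_self reduce_append_left)

lemma reduce_inv_word_cong: "reduce a = reduce b \<Longrightarrow> reduce (inv_word a) = reduce (inv_word b)"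
  by (metis append_Nil append_Nil2 reduce_append_left reduce_append_right
      reduce_append_inv_word_self reduce_inv_word_append_self append_assoc)

section \<open>Endomorphisms of F_2 and bases\<close>

definition subst_word :: "letter list \<Rightarrow> letter list \<Rightarrow> letter list \<Rightarrow> letter list" where
  "subst_word u v w = concat (map (img u v) w)"

lemma subst_word_Nil [simp]: "subst_word u v [] = []"
  by (simp add: subst_word_def)

lemma subst_word_Cons [simp]: "subst_word u v (x # w) = img u v x @ subst_word u v w"
  by (simp add: subst_word_def)

lemma subst_word_append [simp]: "subst_word u v (a @ b) = subst_word u v a @ subst_word u v b"
  by (simp add: subst_word_def)

lemma endo_eq_reduce_subst_word: "endo u v w = reduce (subst_word u v w)"
  by (simp add: endo_def subst_word_def)

lemma reduced_endo: "reduced (endo u v w)"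
  by (simp add: endo_eq_reduce_subst_word)

lemma img_inv_letter: "img u v (inv_letter x) = inv_word (img u v x)"
  by (cases x) auto

lemma subst_word_inv_word: "subst_word u v (inv_word s) = inv_word (subst_word u v s)"
  by (induction s) (auto simp: inv_word_Cons inv_word_append img_inv_letter)

lemma reduce_subst_word_red_cons:
  "reduce (subst_word u v (red_cons x t)) = reduce (img u v x @ subst_word u v t)"
proof (cases t)
  case (Cons y t')
  then show ?thesis
    using reduce_cancel[of "img u v x" "subst_word u v t'"] by (auto simp: img_inv_letter)
qed simp

lemma reduce_subst_word_reduce: "reduce (subst_word u v (reduce w)) = reduce (subst_word u v w)"
proof (induction w)
  case (Cons x w)
  have "reduce (subst_word u v (reduce (x # w))) = reduce (img u v x @ subst_word u v (reduce w))"
    by (simp add: reduce_Cons reduce_subst_word_red_cons)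
  also have "\<dots> = reduce (img u v x @ subst_word u v w)"
    by (rule reduce_append_cong[OF refl Cons.IH])
  finally show ?case by simp
qed simp

lemma reduce_concat_map_cong:
  assumes "\<And>x. reduce (f x) = reduce (g x)"
  shows "reduce (concat (map f w)) = reduce (concat (map g w))"
proof (induction w)
  case (Cons x w)
  show ?case unfolding list.map concat.simps by (rule reduce_append_cong[OF assms Cons.IH])
qed simp

lemma endo_endo: "endo u v (endo u' v' w) = endo (endo u v u') (endo u v v') w"
proof -
  have "endo u v (endo u' v' w) = reduce (subst_word u v (subst_word u' v' w))"
    by (simp add: endo_eq_reduce_subst_word reduce_subst_word_reduce)
  also have "subst_word u v (subst_word u' v' w) = concat (map (\<lambda>x. subst_word u v (img u' v' x)) w)"
    by (induction w) auto
  also have "reduce \<dots> = reduce (concat (map (img (endo u v u') (endo u v v')) w))"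
  proof (rule reduce_concat_map_cong)
    fix x
    have inv: "reduce (subst_word u v (inv_word a)) = reduce (inv_word (endo u v a))" for a
      unfolding subst_word_inv_word endo_eq_reduce_subst_word by (rule reduce_inv_word_cong) simp
    show "reduce (subst_word u v (img u' v' x)) = reduce (img (endo u v u') (endo u v v') x)"
      by (cases x) (simp_all only: img.simps inv, simp_all add: endo_eq_reduce_subst_word)
  qed
  finally show ?thesis by (simp add: endo_def)
qed

lemma endo_generators:
  assumes "reduced w"
  shows "endo [Ga] [Gb] w = w"
proof -
  have "img [Ga] [Gb] x = [x]" for x
    by (cases x) auto
  then have "subst_word [Ga] [Gb] w = w"
    by (induction w) auto
  with assms show ?thesis
    by (simp add: endo_eq_reduce_subst_word reduce_reduced)
qed

text \<open>An endomorphism is an automorphism as soon as it has an endomorphism as two-sided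
  inverse, which it suffices to check on the generators.\<close>
lemma is_basisI:
  assumes "reduced u" "reduced v"
    and "endo u v s = [Ga]" "endo u v t = [Gb]"
    and "endo s t u = [Ga]" "endo s t v = [Gb]"
  shows "is_basis u v"
  unfolding is_basis_def
proof (intro conjI assms(1,2) bij_betw_byWitness[where f' = "endo s t"])
  show "\<forall>w\<in>{w. reduced w}. endo s t (endo u v w) = w"
    and "\<forall>w\<in>{w. reduced w}. endo u v (endo s t w) = w"
    using assms by (simp_all add: endo_endo endo_generators)
qed (auto simp: reduced_endo)

section \<open>Exponent sums\<close>

definition exp_sum :: "letter \<Rightarrow> letter list \<Rightarrow> int" where
  "exp_sum g w = int (count_list w g) - int (count_list w (inv_letter g))"

lemma exp_sum_Nil [simp]: "exp_sum g [] = 0"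
  by (simp add: exp_sum_def)

lemma exp_sum_append [simp]: "exp_sum g (a @ b) = exp_sum g a + exp_sum g b"
  by (simp add: exp_sum_def)

lemma exp_sum_Cons [simp]:
  "exp_sum g (x # w) = (if x = g then 1 else if x = inv_letter g then -1 else 0) + exp_sum g w"
  by (cases x; cases g) (simp_all add: exp_sum_def)

lemma exp_sum_inv_word [simp]: "exp_sum g (inv_word w) = - exp_sum g w"
proof -
  have "count_list (map inv_letter w) y = count_list w (inv_letter y)" for y
    using count_list_map_conv[of inv_letter w "inv_letter y"]
    by (simp add: inj_on_def) (metis inv_letter_inv_letter)
  then show ?thesis by (simp add: exp_sum_def inv_word_def)
qed

lemma exp_sum_red_cons: "exp_sum g (red_cons x t) = exp_sum g (x # t)"
  by (cases t) (cases x; cases g; simp)+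

lemma exp_sum_reduce [simp]: "exp_sum g (reduce w) = exp_sum g w"
  by (induction w) (simp_all add: reduce_Cons exp_sum_red_cons)

lemma exp_sum_endo:
  "exp_sum g (endo u v w) = exp_sum Ga w * exp_sum g u + exp_sum Gb w * exp_sum g v"
proof -
  have "exp_sum g (subst_word u v w) = exp_sum Ga w * exp_sum g u + exp_sum Gb w * exp_sum g v"
  proof (induction w)
    case (Cons x w)
    then show ?case
      by (cases x) (simp_all add: algebra_simps)
  qed simp
  then show ?thesis by (simp add: endo_eq_reduce_subst_word)
qed

text \<open>Abelianization: the exponent-sum matrix of an automorphism has an inverse over the
  integers, so its determinant is a unit and each of its columns is coprime.\<close>
lemma is_basis_coprime_exp_sum:
  assumes "is_basis u v"
  shows "coprime (exp_sum Ga u) (exp_sum Gb u)" and "coprime (exp_sum Ga v) (exp_sum Gb v)"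
proof -
  have bij: "bij_betw (endo u v) {w. reduced w} {w. reduced w}"
    using assms by (simp add: is_basis_def)
  have "reduced [Ga]" "reduced [Gb]" by (simp_all add: reduced_Cons)
  then obtain s t where s: "endo u v s = [Ga]" and t: "endo u v t = [Gb]"
    using bij unfolding bij_betw_def by (metis imageE mem_Collect_eq)
  define a b c d where "a = exp_sum Ga u" "b = exp_sum Ga v" "c = exp_sum Gb u" "d = exp_sum Gb v"
  have "(a * d - b * c) * (exp_sum Ga s * exp_sum Gb t - exp_sum Ga t * exp_sum Gb s)
      = exp_sum Ga (endo u v s) * exp_sum Gb (endo u v t) - exp_sum Gb (endo u v s) * exp_sum Ga (endo u v t)"
    by (simp add: exp_sum_endo a_b_c_d_def algebra_simps)
  then have det: "(a * d - b * c) * (exp_sum Ga s * exp_sum Gb t - exp_sum Ga t * exp_sum Gb s) = 1"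
    by (simp add: s t)
  have unit: "is_unit k" if "k dvd a * d - b * c" for k :: int
    using dvd_mult2[OF that] det by metis
  show "coprime (exp_sum Ga u) (exp_sum Gb u)" "coprime (exp_sum Ga v) (exp_sum Gb v)"
    unfolding a_b_c_d_def[symmetric]
    by (intro coprimeI unit dvd_diff dvd_mult dvd_mult2; assumption)+
qed

lemma primitive_coprime_exp_sum: "primitive w \<Longrightarrow> coprime (exp_sum Ga w) (exp_sum Gb w)"
  unfolding primitive_def using is_basis_coprime_exp_sum by blast

lemma append_eq_append_length_le:
  assumes "a @ b = c @ d" "length a \<le> length c"
  obtains r where "c = a @ r" "b = r @ d"
  using assms by (auto simp: append_eq_append_conv2 dest: arg_cong[of _ _ length])

definition word_pow :: "nat \<Rightarrow> 'a list \<Rightarrow> 'a list" where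
  "word_pow n s = concat (replicate n s)"

lemma word_pow_0 [simp]: "word_pow 0 s = []"
  by (simp add: word_pow_def)

lemma word_pow_Suc [simp]: "word_pow (Suc n) s = s @ word_pow n s"
  by (simp add: word_pow_def)

lemma word_pow_Suc_right: "word_pow (Suc n) s = word_pow n s @ s"
  by (induction n) auto

lemma word_pow_commute: "word_pow n s @ s = s @ word_pow n s"
  by (metis word_pow_Suc word_pow_Suc_right)

lemma length_word_pow [simp]: "length (word_pow n s) = n * length s"
  by (induction n) auto

lemma set_word_pow: "set (word_pow n s) \<subseteq> set s"
  by (induction n) auto

lemma map_word_pow: "map f (word_pow n s) = word_pow n (map f s)"
  by (induction n) auto

lemma count_list_word_pow [simp]: "count_list (word_pow n s) x = n * count_list s x"
  by (induction n) auto

lemma inv_word_word_pow: "inv_word (word_pow n s) = word_pow n (inv_word s)"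
  by (induction n) (auto simp: inv_word_append word_pow_commute)

lemma subst_word_word_pow: "subst_word u v (word_pow n s) = word_pow n (subst_word u v s)"
  by (induction n) auto

lemma reduce_word_pow_cancel: "reduce (word_pow n s @ word_pow n (inv_word s) @ r) = reduce r"
proof (induction n arbitrary: r)
  case (Suc n)
  have "reduce (word_pow (Suc n) s @ word_pow (Suc n) (inv_word s) @ r)
      = reduce (s @ (word_pow n s @ word_pow n (inv_word s) @ (inv_word s @ r)))"
    unfolding word_pow_Suc_right[of n "inv_word s"] by simp
  also have "\<dots> = reduce (s @ inv_word s @ r)"
    using reduce_append_cong[OF refl Suc.IH] by simp
  finally show ?case by (simp add: reduce_cancel)
qed simp

lemma reduce_inv_word_pow_cancel: "reduce (word_pow n (inv_word s) @ word_pow n s @ r) = reduce r"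
  using reduce_word_pow_cancel[of n "inv_word s" r] by simp

lemma reduce_word_pow_cong:
  assumes "reduce a = reduce b"
  shows "reduce (word_pow n a @ r) = reduce (word_pow n b @ r)"
proof (induction n arbitrary: r)
  case (Suc n)
  show ?case using reduce_append_cong[OF assms Suc.IH] by simp
qed simp

section \<open>A family of primitive positive words\<close>

definition witness_partner :: "nat \<Rightarrow> letter list" where
  "witness_partner n = word_pow n [Ga] @ [Gb]"

definition witness :: "nat \<Rightarrow> letter list" where
  "witness n = word_pow n (witness_partner n) @ [Ga]"

text \<open>The inverse of the automorphism a \<mapsto> witness n, b \<mapsto> witness_partner n sends a and b
  to the following two words.\<close>
definition witness_preimage_a :: "nat \<Rightarrow> letter list" where
  "witness_preimage_a n = word_pow n [GbInv] @ [Ga]"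

definition witness_preimage_b :: "nat \<Rightarrow> letter list" where
  "witness_preimage_b n = word_pow n ([GaInv] @ word_pow n [Gb]) @ [Gb]"

lemma endo_witness_preimage_a:
  "endo (witness n) (witness_partner n) (witness_preimage_a n) = [Ga]"
proof -
  have "endo (witness n) (witness_partner n) (witness_preimage_a n)
      = reduce (word_pow n (inv_word (witness_partner n)) @ word_pow n (witness_partner n) @ [Ga])"
    by (simp add: endo_eq_reduce_subst_word witness_preimage_a_def subst_word_word_pow witness_def)
  then show ?thesis by (simp add: reduce_inv_word_pow_cancel)
qed

lemma endo_witness_preimage_b:
  "endo (witness n) (witness_partner n) (witness_preimage_b n) = [Gb]"
proof -
  let ?x = "witness_partner n"
  have "endo (witness n) ?x (witness_preimage_b n)
      = reduce (word_pow n ([GaInv] @ word_pow n (inv_word ?x) @ word_pow n ?x) @ ?x)"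
    by (simp add: endo_eq_reduce_subst_word witness_preimage_b_def subst_word_word_pow witness_def
        inv_word_append inv_word_word_pow)
  also have "\<dots> = reduce (word_pow n [GaInv] @ ?x)"
    by (rule reduce_word_pow_cong)
      (metis reduce_append_right reduce_inv_word_pow_cancel append_Nil2 reduce_Nil)
  also have "\<dots> = reduce (word_pow n (inv_word [Ga]) @ word_pow n [Ga] @ [Gb])"
    by (simp add: witness_partner_def)
  finally show ?thesis by (simp only: reduce_inv_word_pow_cancel reduce_singleton)
qed

lemma endo_preimages_witness_partner:
  "endo (witness_preimage_a n) (witness_preimage_b n) (witness_partner n) = [Gb]"
proof -
  have "inv_word (witness_preimage_a n) = [GaInv] @ word_pow n [Gb]"
    by (simp add: witness_preimage_a_def inv_word_append inv_word_word_pow)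
  then have "endo (witness_preimage_a n) (witness_preimage_b n) (witness_partner n)
      = reduce (word_pow n (witness_preimage_a n) @ word_pow n (inv_word (witness_preimage_a n)) @ [Gb])"
    by (simp add: endo_eq_reduce_subst_word witness_partner_def subst_word_word_pow
        witness_preimage_b_def)
  then show ?thesis by (simp only: reduce_word_pow_cancel reduce_singleton)
qed

lemma endo_preimages_witness:
  "endo (witness_preimage_a n) (witness_preimage_b n) (witness n) = [Ga]"
proof -
  let ?s = "witness_preimage_a n" and ?t = "witness_preimage_b n"
  have "endo ?s ?t (witness n) = reduce (word_pow n (subst_word ?s ?t (witness_partner n)) @ ?s)"
    by (simp add: endo_eq_reduce_subst_word witness_def subst_word_word_pow)
  also have "\<dots> = reduce (word_pow n [Gb] @ ?s)"
    by (rule reduce_word_pow_cong)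
      (metis endo_preimages_witness_partner endo_eq_reduce_subst_word reduce_singleton)
  also have "\<dots> = reduce (word_pow n [Gb] @ word_pow n (inv_word [Gb]) @ [Ga])"
    by (simp add: witness_preimage_a_def)
  finally show ?thesis by (simp only: reduce_word_pow_cancel reduce_singleton)
qed

lemma reduced_positive: "set w \<subseteq> {Ga, Gb} \<Longrightarrow> reduced w"
  by (induction w) (auto simp: reduced_Cons neq_Nil_conv)

lemma set_witness_partner: "set (witness_partner n) \<subseteq> {Ga, Gb}"
  using set_word_pow[of n "[Ga]"] by (auto simp: witness_partner_def)

lemma set_witness: "set (witness n) \<subseteq> {Ga, Gb}"
  using set_word_pow[of n "witness_partner n"] set_witness_partner[of n]
  by (auto simp: witness_def)

lemma primitive_witness: "primitive (witness n)"
proof -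
  have "is_basis (witness n) (witness_partner n)"
    by (rule is_basisI[OF reduced_positive reduced_positive endo_witness_preimage_a
          endo_witness_preimage_b endo_preimages_witness endo_preimages_witness_partner])
      (rule set_witness set_witness_partner)+
  then show ?thesis unfolding primitive_def by blast
qed

lemma count_list_witness_partner [simp]: "count_list (witness_partner q) Gb = 1"
  by (simp add: witness_partner_def)

lemma length_witness_partner [simp]: "length (witness_partner q) = Suc q"
  by (simp add: witness_partner_def)

lemma witness_prefix_long:
  assumes "m @ y = word_pow k (witness_partner q) @ [Ga]" "count_list m Gb \<noteq> 0"
  shows "q + 1 \<le> length m"
proof (rule ccontr)
  assume short: "\<not> q + 1 \<le> length m"
  have "Gb \<in> set m" using assms(2) by (simp add: count_list_0_iff)
  moreover have "set m \<subseteq> {Ga}"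
  proof (cases k)
    case 0
    then show ?thesis using arg_cong[OF assms(1), of set] by auto
  next
    case (Suc k')
    then have "m @ y = word_pow q [Ga] @ ([Gb] @ word_pow k' (witness_partner q) @ [Ga])"
      using assms(1) by (simp add: witness_partner_def)
    then obtain r where "word_pow q [Ga] = m @ r"
      using short by (auto elim: append_eq_append_length_le)
    then show ?thesis using set_word_pow[of q "[Ga]"] by auto
  qed
  ultimately show False by auto
qed

text \<open>Two occurrences of b in the witness are separated by at least q letters a.\<close>
lemma witness_factor_long:
  assumes "u @ m @ y = word_pow k (witness_partner q) @ [Ga]" "2 \<le> count_list m Gb"
  shows "q + 2 \<le> length m"
  using assms
proof (induction k arbitrary: u)
  case 0
  have "Gb \<notin> set m" using arg_cong[OF "0.prems"(1), of set] by auto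
  then show ?case using "0.prems"(2) by simp
next
  case (Suc k)
  have e: "u @ (m @ y) = witness_partner q @ (word_pow k (witness_partner q) @ [Ga])"
    using Suc.prems by simp
  show ?case
  proof (cases "q + 1 \<le> length u")
    case True
    then have "length (witness_partner q) \<le> length u" by simp
    then obtain u' where "u = witness_partner q @ u'" "word_pow k (witness_partner q) @ [Ga] = u' @ m @ y"
      by (rule append_eq_append_length_le[OF e[symmetric]])
    then show ?thesis using Suc.IH[of u'] Suc.prems(2) by metis
  next
    case False
    then obtain r where r: "witness_partner q = u @ r" "m @ y = r @ word_pow k (witness_partner q) @ [Ga]"
      using e by (auto elim: append_eq_append_length_le)
    have "r \<noteq> []" using r(1) False by auto
    have "count_list r Gb \<le> 1" using arg_cong[OF r(1), of "\<lambda>w. count_list w Gb"] by simp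
    show ?thesis
    proof (cases "length m \<le> length r")
      case True
      then obtain r' where "r = m @ r'" using r(2) by (auto elim: append_eq_append_length_le)
      then show ?thesis using \<open>count_list r Gb \<le> 1\<close> Suc.prems(2) by simp
    next
      case False
      then have "length r \<le> length m" by simp
      then obtain m' where m': "m = r @ m'" "word_pow k (witness_partner q) @ [Ga] = m' @ y"
        by (rule append_eq_append_length_le[OF r(2)[symmetric]])
      have "count_list m' Gb \<noteq> 0" using m'(1) \<open>count_list r Gb \<le> 1\<close> Suc.prems(2) by simp
      then have "q + 1 \<le> length m'" by (rule witness_prefix_long[OF m'(2)[symmetric]])
      then show ?thesis using m'(1) \<open>r \<noteq> []\<close> by (cases r) auto
    qed
  qed
qed

lemma witness_factor_count_Gb_le_1:
  assumes "witness q = u @ m @ y" "length m < q + 2"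
  shows "count_list m Gb \<le> 1"
  using witness_factor_long[of u m y q q] assms by (force simp: witness_def)

section \<open>Parse trees and the pumping lemma\<close>

datatype 'a ptree = Leaf "nat + 'a" | Node nat "'a ptree list"

fun ptree_root :: "'a ptree \<Rightarrow> nat + 'a" where
  "ptree_root (Leaf s) = s"
| "ptree_root (Node A ts) = Inl A"

fun ptree_fringe :: "'a ptree \<Rightarrow> (nat + 'a) list" where
  "ptree_fringe (Leaf s) = [s]"
| "ptree_fringe (Node A ts) = concat (map ptree_fringe ts)"

fun ptree_valid :: "(nat \<times> (nat + 'a) list) set \<Rightarrow> 'a ptree \<Rightarrow> bool" where
  "ptree_valid P (Leaf s) = True"
| "ptree_valid P (Node A ts) = ((A, map ptree_root ts) \<in> P \<and> (\<forall>t\<in>set ts. ptree_valid P t))"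

fun ptree_height :: "'a ptree \<Rightarrow> nat" where
  "ptree_height (Leaf s) = 0"
| "ptree_height (Node A ts) = Suc (foldr max (map ptree_height ts) 0)"

fun ptree_size :: "'a ptree \<Rightarrow> nat" where
  "ptree_size (Leaf s) = 1"
| "ptree_size (Node A ts) = Suc (sum_list (map ptree_size ts))"

fun ptree_labels :: "'a ptree \<Rightarrow> nat set" where
  "ptree_labels (Leaf s) = {}"
| "ptree_labels (Node A ts) = insert A (\<Union>t\<in>set ts. ptree_labels t)"

definition parse_tree :: "(nat \<times> (nat + 'a) list) set \<Rightarrow> nat \<Rightarrow> 'a list \<Rightarrow> 'a ptree \<Rightarrow> bool" where
  "parse_tree P S w t \<longleftrightarrow> ptree_valid P t \<and> ptree_root t = Inl S \<and> ptree_fringe t = map Inr w"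

text \<open>A context is a tree with one subtree replaced by a hole; its root is only determined
  once the hole is filled, hence the extra argument of \<open>ctxt_root\<close> and \<open>ctxt_valid\<close>.\<close>
datatype 'a ctxt = Hole | CNode nat "'a ptree list" "'a ctxt" "'a ptree list"

fun plug :: "'a ctxt \<Rightarrow> 'a ptree \<Rightarrow> 'a ptree" where
  "plug Hole s = s"
| "plug (CNode A l C r) s = Node A (l @ [plug C s] @ r)"

fun ctxt_root :: "'a ctxt \<Rightarrow> nat + 'a \<Rightarrow> nat + 'a" where
  "ctxt_root Hole X = X"
| "ctxt_root (CNode A l C r) X = Inl A"

fun ctxt_valid :: "(nat \<times> (nat + 'a) list) set \<Rightarrow> 'a ctxt \<Rightarrow> nat + 'a \<Rightarrow> bool" where
  "ctxt_valid P Hole X = True"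
| "ctxt_valid P (CNode A l C r) X = ((A, map ptree_root l @ [ctxt_root C X] @ map ptree_root r) \<in> P \<and>
     (\<forall>t\<in>set l. ptree_valid P t) \<and> (\<forall>t\<in>set r. ptree_valid P t) \<and> ctxt_valid P C X)"

fun ctxt_left :: "'a ctxt \<Rightarrow> (nat + 'a) list" where
  "ctxt_left Hole = []"
| "ctxt_left (CNode A l C r) = concat (map ptree_fringe l) @ ctxt_left C"

fun ctxt_right :: "'a ctxt \<Rightarrow> (nat + 'a) list" where
  "ctxt_right Hole = []"
| "ctxt_right (CNode A l C r) = ctxt_right C @ concat (map ptree_fringe r)"

fun ctxt_size :: "'a ctxt \<Rightarrow> nat" where
  "ctxt_size Hole = 0"
| "ctxt_size (CNode A l C r) =
     Suc (sum_list (map ptree_size l) + ctxt_size C + sum_list (map ptree_size r))"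

fun ctxt_pump :: "'a ctxt \<Rightarrow> nat \<Rightarrow> 'a ptree \<Rightarrow> 'a ptree" where
  "ctxt_pump C 0 s = s"
| "ctxt_pump C (Suc n) s = plug C (ctxt_pump C n s)"

lemma ptree_root_plug: "ptree_root (plug C s) = ctxt_root C (ptree_root s)"
  by (induction C) auto

lemma ptree_fringe_plug: "ptree_fringe (plug C s) = ctxt_left C @ ptree_fringe s @ ctxt_right C"
  by (induction C) auto

lemma ptree_valid_plug: "ptree_valid P (plug C s) \<longleftrightarrow> ctxt_valid P C (ptree_root s) \<and> ptree_valid P s"
  by (induction C) (auto simp: ptree_root_plug)

lemma ptree_size_plug: "ptree_size (plug C s) = ctxt_size C + ptree_size s"
  by (induction C) auto

lemma foldr_max_ge: "t \<in> set ts \<Longrightarrow> f t \<le> foldr max (map f ts) (0::nat)"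
  by (induction ts) auto

lemma foldr_max_le: "(\<And>t. t \<in> set ts \<Longrightarrow> f t \<le> k) \<Longrightarrow> foldr max (map f ts) (0::nat) \<le> k"
  by (induction ts) auto

lemma ptree_height_plug: "ptree_height s \<le> ptree_height (plug C s)"
proof (induction C)
  case (CNode A l C r)
  have "ptree_height (plug C s) \<le> foldr max (map ptree_height (l @ [plug C s] @ r)) 0"
    by (rule foldr_max_ge) simp
  with CNode show ?case by simp
qed simp

lemma ptree_valid_ctxt_pump:
  assumes "ctxt_valid P C (ptree_root s)" "ctxt_root C (ptree_root s) = ptree_root s" "ptree_valid P s"
  shows "ptree_valid P (ctxt_pump C n s) \<and> ptree_root (ctxt_pump C n s) = ptree_root s"
  by (induction n) (use assms in \<open>auto simp: ptree_valid_plug ptree_root_plug\<close>)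

lemma ptree_fringe_ctxt_pump:
  "ptree_fringe (ctxt_pump C n s) = word_pow n (ctxt_left C) @ ptree_fringe s @ word_pow n (ctxt_right C)"
  by (induction n) (auto simp: ptree_fringe_plug word_pow_commute)

lemma cfg_steps_in_context:
  "(cfg_step P)\<^sup>*\<^sup>* a b \<Longrightarrow> (cfg_step P)\<^sup>*\<^sup>* (l @ a @ r) (l @ b @ r)"
proof (induction rule: rtranclp_induct)
  case (step y z)
  from step.hyps(2) obtain l' r' A \<alpha> where "y = l' @ [Inl A] @ r'" "(A, \<alpha>) \<in> P" "z = l' @ \<alpha> @ r'"
    unfolding cfg_step_def by blast
  then have "cfg_step P (l @ y @ r) (l @ z @ r)"
    unfolding cfg_step_def by (intro exI[of _ "l @ l'"] exI[of _ "r' @ r"]) auto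
  with step.IH show ?case by (rule rtranclp.rtrancl_into_rtrancl)
qed simp

lemma cfg_steps_append:
  "(cfg_step P)\<^sup>*\<^sup>* a b \<Longrightarrow> (cfg_step P)\<^sup>*\<^sup>* c d \<Longrightarrow> (cfg_step P)\<^sup>*\<^sup>* (a @ c) (b @ d)"
  using cfg_steps_in_context[of P a b "[]" c] cfg_steps_in_context[of P c d b "[]"] by simp

lemma cfg_steps_concat:
  "(\<And>t. t \<in> set ts \<Longrightarrow> (cfg_step P)\<^sup>*\<^sup>* [f t] (g t)) \<Longrightarrow>
   (cfg_step P)\<^sup>*\<^sup>* (map f ts) (concat (map g ts))"
  by (induction ts) (auto intro: cfg_steps_append[of P "[_]", simplified])

lemma ptree_derives: "ptree_valid P t \<Longrightarrow> (cfg_step P)\<^sup>*\<^sup>* [ptree_root t] (ptree_fringe t)"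
proof (induction t)
  case (Node A ts)
  have "cfg_step P [Inl A] (map ptree_root ts)"
    using Node.prems unfolding cfg_step_def by (intro exI[of _ "[]"]) auto
  moreover have "(cfg_step P)\<^sup>*\<^sup>* (map ptree_root ts) (concat (map ptree_fringe ts))"
    using Node by (intro cfg_steps_concat) auto
  ultimately show ?case by (simp add: converse_rtranclp_into_rtranclp)
qed simp

lemma derives_ptrees:
  "(cfg_step P)\<^sup>*\<^sup>* \<beta> \<gamma> \<Longrightarrow>
   \<exists>ts. map ptree_root ts = \<beta> \<and> concat (map ptree_fringe ts) = \<gamma> \<and> (\<forall>t\<in>set ts. ptree_valid P t)"
proof (induction rule: converse_rtranclp_induct)
  case base
  show ?case by (intro exI[of _ "map Leaf \<gamma>"]) (induction \<gamma>, auto)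
next
  case (step y z)
  from step.hyps(1) obtain l r A \<alpha> where y: "y = l @ [Inl A] @ r" and P: "(A, \<alpha>) \<in> P"
      and z: "z = l @ \<alpha> @ r"
    unfolding cfg_step_def by blast
  from step.IH obtain ts where ts: "map ptree_root ts = l @ \<alpha> @ r" "concat (map ptree_fringe ts) = \<gamma>"
      "\<forall>t\<in>set ts. ptree_valid P t"
    using z by blast
  obtain ts1 ts23 where ts1: "ts = ts1 @ ts23" "map ptree_root ts1 = l"
      and ts23: "map ptree_root ts23 = \<alpha> @ r"
    using ts(1) by (metis map_eq_append_conv)
  obtain ts2 ts3 where "ts23 = ts2 @ ts3" "map ptree_root ts2 = \<alpha>" "map ptree_root ts3 = r"
    using ts23 by (metis map_eq_append_conv)
  with ts ts1 P y show ?case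
    by (intro exI[of _ "ts1 @ [Node A ts2] @ ts3"]) auto
qed

lemma cfg_lang_iff_parse_tree: "w \<in> cfg_lang P S \<longleftrightarrow> (\<exists>t. parse_tree P S w t)"
proof
  assume "w \<in> cfg_lang P S"
  then have deriv: "(cfg_step P)\<^sup>*\<^sup>* [Inl S] (map Inr w)" by (simp add: cfg_lang_def)
  obtain ts where "map ptree_root ts = [Inl S]" "concat (map ptree_fringe ts) = map Inr w"
      "\<forall>t\<in>set ts. ptree_valid P t"
    using derives_ptrees[OF deriv] by metis
  then show "\<exists>t. parse_tree P S w t" by (cases ts) (auto simp: parse_tree_def)
qed (auto simp: parse_tree_def cfg_lang_def dest: ptree_derives)

lemma ptree_labels_subset: "ptree_valid P t \<Longrightarrow> ptree_labels t \<subseteq> fst ` P"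
  by (induction t) (auto intro: rev_image_eqI)

lemma ptree_label_subtree: "A \<in> ptree_labels t \<Longrightarrow> \<exists>C ts. t = plug C (Node A ts)"
proof (induction t)
  case (Node B ts)
  show ?case
  proof (cases "A = B")
    case True
    then show ?thesis by (intro exI[of _ Hole]) auto
  next
    case False
    then obtain t where t: "t \<in> set ts" "A \<in> ptree_labels t" using Node.prems by auto
    then obtain C ts' where "t = plug C (Node A ts')" using Node.IH by blast
    moreover obtain l r where "ts = l @ t # r" using split_list[OF t(1)] by blast
    ultimately show ?thesis by (intro exI[of _ "CNode B l C r"]) auto
  qed
qed simp

text \<open>\<open>C2 \<noteq> Hole\<close> together with \<open>ctxt_root C2 (Inl B) = Inl B\<close> says that C2 leads from a
  node labelled B down to another node labelled B.\<close>
lemma ptree_repeated_label: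
  "finite Ns \<Longrightarrow> ptree_labels t \<subseteq> Ns \<Longrightarrow> card Ns < ptree_height t \<Longrightarrow>
   \<exists>C1 C2 B ts. t = plug C1 (plug C2 (Node B ts)) \<and> C2 \<noteq> Hole \<and> ctxt_root C2 (Inl B) = Inl B"
proof (induction t arbitrary: Ns)
  case (Node A ts)
  show ?case
  proof (cases "\<exists>t\<in>set ts. A \<in> ptree_labels t")
    case True
    then obtain t where t: "t \<in> set ts" "A \<in> ptree_labels t" by blast
    then obtain C ts' where "t = plug C (Node A ts')" using ptree_label_subtree by blast
    moreover obtain l r where "ts = l @ t # r" using split_list[OF t(1)] by blast
    ultimately show ?thesis
      by (intro exI[of _ Hole] exI[of _ "CNode A l C r"] exI[of _ A] exI[of _ ts']) auto
  next
    case False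
    have A: "A \<in> Ns" using Node.prems by auto
    then have "0 < card Ns" using Node.prems(1) card_gt_0_iff by blast
    then obtain t where t: "t \<in> set ts" "card Ns - 1 < ptree_height t"
      using foldr_max_le[of ts ptree_height "card Ns - 1"] Node.prems(3) by force
    have "ptree_labels t \<subseteq> Ns - {A}" using False t Node.prems by auto
    moreover have "card (Ns - {A}) < ptree_height t"
      using t A Node.prems(1) by (simp add: card_Diff_singleton)
    ultimately obtain C1 C2 B ts' where "t = plug C1 (plug C2 (Node B ts'))" "C2 \<noteq> Hole"
        "ctxt_root C2 (Inl B) = Inl B"
      using Node.IH[OF t(1)] Node.prems(1) by blast
    moreover obtain l r where "ts = l @ t # r" using split_list[OF t(1)] by blast
    ultimately show ?thesis by (intro exI[of _ "CNode A l C1 r"] exI[of _ C2] exI[of _ B] exI[of _ ts']) auto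
  qed
qed simp

lemma ptree_repeated_label_low:
  "finite Ns \<Longrightarrow> ptree_labels t \<subseteq> Ns \<Longrightarrow> card Ns < ptree_height t \<Longrightarrow>
   \<exists>C1 C2 B ts. t = plug C1 (plug C2 (Node B ts)) \<and> C2 \<noteq> Hole \<and> ctxt_root C2 (Inl B) = Inl B
      \<and> ptree_height (plug C2 (Node B ts)) \<le> Suc (card Ns)"
proof (induction t)
  case (Node A ts)
  show ?case
  proof (cases "\<exists>t\<in>set ts. card Ns < ptree_height t")
    case True
    then obtain t where t: "t \<in> set ts" "card Ns < ptree_height t" by blast
    then have "ptree_labels t \<subseteq> Ns" using Node.prems by auto
    then obtain C1 C2 B ts' where "t = plug C1 (plug C2 (Node B ts'))" "C2 \<noteq> Hole"
        "ctxt_root C2 (Inl B) = Inl B" "ptree_height (plug C2 (Node B ts')) \<le> Suc (card Ns)"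
      using Node.IH[OF t(1)] Node.prems(1) t(2) by blast
    moreover obtain l r where "ts = l @ t # r" using split_list[OF t(1)] by blast
    ultimately show ?thesis by (intro exI[of _ "CNode A l C1 r"] exI[of _ C2] exI[of _ B] exI[of _ ts']) auto
  next
    case False
    then have "ptree_height (Node A ts) \<le> Suc (card Ns)"
      using foldr_max_le[of ts ptree_height "card Ns"] by (simp add: not_less)
    moreover obtain C1 C2 B ts' where "Node A ts = plug C1 (plug C2 (Node B ts'))" "C2 \<noteq> Hole"
        "ctxt_root C2 (Inl B) = Inl B"
      using ptree_repeated_label[OF Node.prems] by blast
    ultimately show ?thesis using ptree_height_plug[of "plug C2 (Node B ts')" C1] by fastforce
  qed
qed simp

lemma length_ptree_fringe_le:
  assumes "\<forall>(A, \<alpha>)\<in>P. length \<alpha> \<le> m" "1 \<le> m" "ptree_valid P t"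
  shows "length (ptree_fringe t) \<le> m ^ ptree_height t"
  using assms(3)
proof (induction t)
  case (Node A ts)
  let ?h = "foldr max (map ptree_height ts) 0"
  have "length (ptree_fringe (Node A ts)) = (\<Sum>t\<leftarrow>ts. length (ptree_fringe t))"
    by (simp add: length_concat comp_def)
  also have "\<dots> \<le> (\<Sum>t\<leftarrow>ts. m ^ ?h)"
  proof (rule sum_list_mono)
    fix t assume t: "t \<in> set ts"
    have "length (ptree_fringe t) \<le> m ^ ptree_height t" using Node t by auto
    also have "\<dots> \<le> m ^ ?h" by (rule power_increasing[OF foldr_max_ge[OF t] assms(2)])
    finally show "length (ptree_fringe t) \<le> m ^ ?h" .
  qed
  also have "\<dots> = length ts * m ^ ?h" by (simp add: sum_list_triv)
  also have "\<dots> \<le> m * m ^ ?h"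
    using assms(1) Node.prems by (auto intro: mult_right_mono)
  finally show ?case by simp
qed simp

lemma map_eq_append5E:
  assumes "map f w = a1 @ a2 @ a3 @ a4 @ a5"
  obtains u v x y z where "w = u @ v @ x @ y @ z" "map f u = a1" "map f v = a2" "map f x = a3"
    "map f y = a4" "map f z = a5"
proof -
  obtain u r1 where "w = u @ r1" "map f u = a1" "map f r1 = a2 @ a3 @ a4 @ a5"
    using assms by (metis map_eq_append_conv)
  moreover obtain v r2 where "r1 = v @ r2" "map f v = a2" "map f r2 = a3 @ a4 @ a5"
    using calculation(3) by (metis map_eq_append_conv)
  moreover obtain x r3 where "r2 = x @ r3" "map f x = a3" "map f r3 = a4 @ a5"
    using calculation(6) by (metis map_eq_append_conv)
  moreover obtain y z where "r3 = y @ z" "map f y = a4" "map f z = a5"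
    using calculation(9) by (metis map_eq_append_conv)
  ultimately show thesis using that by blast
qed

text \<open>Minimality of the tree forces the iterated context C2 to contribute terminals.\<close>
lemma parse_tree_pump:
  assumes t: "parse_tree P S w (plug C1 (plug C2 s))"
    and min: "\<And>t'. parse_tree P S w t' \<Longrightarrow> ptree_size (plug C1 (plug C2 s)) \<le> ptree_size t'"
    and "C2 \<noteq> Hole" and loop: "ctxt_root C2 (ptree_root s) = ptree_root s"
  shows "\<exists>u v x y z. w = u @ v @ x @ y @ z \<and> v @ y \<noteq> [] \<and>
    map Inr (v @ x @ y) = ptree_fringe (plug C2 s) \<and>
    (\<forall>i. u @ word_pow i v @ x @ word_pow i y @ z \<in> cfg_lang P S)"
proof -
  have valid: "ctxt_valid P C1 (ptree_root s)" "ctxt_valid P C2 (ptree_root s)" "ptree_valid P s"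
    and root: "ctxt_root C1 (ptree_root s) = Inl S"
    using t loop by (auto simp: parse_tree_def ptree_valid_plug ptree_root_plug)
  have "map Inr w = ctxt_left C1 @ ctxt_left C2 @ ptree_fringe s @ ctxt_right C2 @ ctxt_right C1"
    using t by (simp add: parse_tree_def ptree_fringe_plug)
  then obtain u v x y z where w: "w = u @ v @ x @ y @ z" and
      fr: "map Inr u = ctxt_left C1" "map Inr v = ctxt_left C2" "map Inr x = ptree_fringe s"
        "map Inr y = ctxt_right C2" "map Inr z = ctxt_right C1"
    by (rule map_eq_append5E)
  have "v @ y \<noteq> []"
  proof
    assume "v @ y = []"
    then have "parse_tree P S w (plug C1 s)"
      using valid root fr w by (simp add: parse_tree_def ptree_valid_plug ptree_root_plug
          ptree_fringe_plug)
    then have "ptree_size (plug C1 (plug C2 s)) \<le> ptree_size (plug C1 s)" by (rule min)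
    moreover have "ctxt_size C2 \<noteq> 0" using \<open>C2 \<noteq> Hole\<close> by (cases C2) auto
    ultimately show False by (simp add: ptree_size_plug)
  qed
  moreover have "map Inr (v @ x @ y) = ptree_fringe (plug C2 s)"
    using fr by (simp add: ptree_fringe_plug)
  moreover have "u @ word_pow i v @ x @ word_pow i y @ z \<in> cfg_lang P S" for i
  proof -
    have "parse_tree P S (u @ word_pow i v @ x @ word_pow i y @ z) (plug C1 (ctxt_pump C2 i s))"
      using ptree_valid_ctxt_pump[OF valid(2) loop valid(3), of i] valid(1) root fr
      by (simp add: parse_tree_def ptree_valid_plug ptree_root_plug ptree_fringe_plug
          ptree_fringe_ctxt_pump map_word_pow)
    then show ?thesis by (auto simp: cfg_lang_iff_parse_tree)
  qed
  ultimately show ?thesis using w by blast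
qed

lemma pumping_lemma:
  assumes "finite P"
  obtains p where "\<And>w. w \<in> cfg_lang P S \<Longrightarrow> p < length w \<Longrightarrow>
    \<exists>u v x y z. w = u @ v @ x @ y @ z \<and> v @ y \<noteq> [] \<and> length (v @ x @ y) \<le> p \<and>
       (\<forall>i. u @ word_pow i v @ x @ word_pow i y @ z \<in> cfg_lang P S)"
proof -
  define m where "m = 2 + (\<Sum>(A, \<alpha>)\<in>P. length \<alpha>)"
  define Ns where "Ns = fst ` P"
  have "finite Ns" using assms by (simp add: Ns_def)
  have m: "1 \<le> m" "\<forall>(A, \<alpha>)\<in>P. length \<alpha> \<le> m"
    using member_le_sum[OF _ _ assms, of _ "\<lambda>(A, \<alpha>). length \<alpha>"] by (fastforce simp: m_def)+
  show thesis
  proof (rule that[of "m ^ Suc (card Ns)"])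
    fix w assume "w \<in> cfg_lang P S" and long: "m ^ Suc (card Ns) < length w"
    then obtain t where t: "parse_tree P S w t"
        and min: "\<And>t'. parse_tree P S w t' \<Longrightarrow> ptree_size t \<le> ptree_size t'"
      using ex_has_least_nat[of "parse_tree P S w" _ ptree_size] by (metis cfg_lang_iff_parse_tree)
    have "card Ns < ptree_height t"
    proof (rule ccontr)
      assume "\<not> card Ns < ptree_height t"
      then have "m ^ ptree_height t \<le> m ^ Suc (card Ns)" by (intro power_increasing m(1)) simp
      moreover have "length w \<le> m ^ ptree_height t"
        using length_ptree_fringe_le[OF m(2,1), of t] t by (simp add: parse_tree_def)
      ultimately show False using long by simp
    qed
    moreover have "ptree_labels t \<subseteq> Ns"
      using ptree_labels_subset t by (auto simp: Ns_def parse_tree_def)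
    ultimately obtain C1 C2 B ts where dec: "t = plug C1 (plug C2 (Node B ts))" and "C2 \<noteq> Hole"
       and loop: "ctxt_root C2 (Inl B) = Inl B" and low: "ptree_height (plug C2 (Node B ts)) \<le> Suc (card Ns)"
      using ptree_repeated_label_low[OF \<open>finite Ns\<close>] by blast
    have pt: "parse_tree P S w (plug C1 (plug C2 (Node B ts)))" using t dec by simp
    have mn: "\<And>t'. parse_tree P S w t' \<Longrightarrow> ptree_size (plug C1 (plug C2 (Node B ts))) \<le> ptree_size t'"
      using min dec by simp
    have lp: "ctxt_root C2 (ptree_root (Node B ts)) = ptree_root (Node B ts)" using loop by simp
    obtain u v x y z where "w = u @ v @ x @ y @ z" "v @ y \<noteq> []"
        and fr: "map Inr (v @ x @ y) = ptree_fringe (plug C2 (Node B ts))"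
        and "\<forall>i. u @ word_pow i v @ x @ word_pow i y @ z \<in> cfg_lang P S"
      using parse_tree_pump[OF pt mn \<open>C2 \<noteq> Hole\<close> lp] by blast
    moreover have "length (v @ x @ y) \<le> m ^ Suc (card Ns)"
    proof -
      have "ptree_valid P (plug C2 (Node B ts))" using t dec by (simp add: parse_tree_def ptree_valid_plug)
      then have "length (v @ x @ y) \<le> m ^ ptree_height (plug C2 (Node B ts))"
        using length_ptree_fringe_le[OF m(2,1)] arg_cong[OF fr, of length] by simp
      also have "\<dots> \<le> m ^ Suc (card Ns)" by (rule power_increasing[OF low m(1)])
      finally show ?thesis .
    qed
    ultimately show "\<exists>u v x y z. w = u @ v @ x @ y @ z \<and> v @ y \<noteq> [] \<and>
        length (v @ x @ y) \<le> m ^ Suc (card Ns) \<and>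
        (\<forall>i. u @ word_pow i v @ x @ word_pow i y @ z \<in> cfg_lang P S)"
      by blast
  qed
qed

section \<open>Non-context-freeness\<close>

lemma length_eq_count_list_add:
  "set w \<subseteq> {a, b} \<Longrightarrow> a \<noteq> b \<Longrightarrow> length w = count_list w a + count_list w b"
  by (induction w) auto

lemma exp_sum_positive: "set w \<subseteq> {Ga, Gb} \<Longrightarrow> g \<in> {Ga, Gb} \<Longrightarrow> exp_sum g w = int (count_list w g)"
  by (induction w) auto

lemma exp_sum_pumped:
  "exp_sum g (u @ word_pow (Suc j) v @ x @ word_pow (Suc j) y @ z)
     = exp_sum g (u @ v @ x @ y @ z) + int j * exp_sum g (v @ y)"
proof -
  have "exp_sum g (word_pow n s) = int n * exp_sum g s" for n s
    by (induction n) (simp_all add: algebra_simps)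
  then show ?thesis by (simp add: algebra_simps)
qed

lemma exp_sum_witness: "exp_sum Ga (witness q) = int (q * q + 1)" "exp_sum Gb (witness q) = int q"
  using exp_sum_positive[OF set_witness, of Ga q] exp_sum_positive[OF set_witness, of Gb q]
  by (simp_all add: witness_def witness_partner_def)

text \<open>For \<beta> = 0, q divides both numbers once j \<alpha> \<equiv> -1 (mod q). For \<beta> = 1, writing
  q = \<alpha> + 2 + d, the choice j = q (d + 1) + 1 makes both numbers multiples of q + j.\<close>
lemma pumped_exp_sums_not_coprime:
  fixes q \<alpha> \<beta> :: nat
  assumes "prime q" "\<beta> \<le> 1" "0 < \<alpha> + \<beta>" "\<alpha> + \<beta> < q"
  obtains j where "\<not> coprime (q * q + 1 + j * \<alpha>) (q + j * \<beta>)"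
proof (cases "\<beta> = 0")
  case True
  have "\<not> q dvd \<alpha>" using assms True by (auto dest: dvd_imp_le)
  then have "coprime \<alpha> q" using prime_imp_coprime[OF assms(1)] by (simp add: coprime_commute)
  then obtain j where "[\<alpha> * j = q - 1] (mod q)" using cong_solve by blast
  then have "[1 + \<alpha> * j = 1 + (q - 1)] (mod q)" by (rule cong_add[OF cong_refl])
  then have "q dvd 1 + \<alpha> * j"
    using prime_gt_0_nat[OF assms(1)] cong_dvd_iff[of "1 + \<alpha> * j" q q] by simp
  then have "q dvd q * q + (1 + \<alpha> * j)" by (rule dvd_add[OF dvd_triv_left])
  then have "q dvd q * q + 1 + j * \<alpha>" by (simp add: algebra_simps)
  moreover have "q dvd q + j * \<beta>" using True by simp
  moreover have "\<not> is_unit q" using prime_gt_1_nat[OF assms(1)] by simp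
  ultimately have "\<not> coprime (q * q + 1 + j * \<alpha>) (q + j * \<beta>)" by (rule not_coprimeI)
  then show thesis by (rule that)
next
  case False
  then have \<beta>: "\<beta> = 1" using assms(2) by simp
  then have "\<alpha> + 2 \<le> q" using assms(4) by simp
  then obtain d where q: "q = \<alpha> + 2 + d" using le_Suc_ex by blast
  define D where "D = q * (d + 2) + 1"
  have "q * q + 1 + (q * (d + 1) + 1) * \<alpha> = D * (1 + \<alpha>)"
    unfolding D_def q by (simp add: algebra_simps)
  then have "D dvd q * q + 1 + (q * (d + 1) + 1) * \<alpha>" by simp
  moreover have "D dvd q + (q * (d + 1) + 1) * \<beta>" using \<beta> by (simp add: D_def algebra_simps)
  moreover have "\<not> is_unit D" using q by (simp add: D_def)
  ultimately have "\<not> coprime (q * q + 1 + (q * (d + 1) + 1) * \<alpha>) (q + (q * (d + 1) + 1) * \<beta>)"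
    by (rule not_coprimeI)
  then show thesis by (rule that)
qed

lemma witness_pumping_not_primitive:
  assumes "prime q" "witness q = u @ v @ x @ y @ z" "v @ y \<noteq> []" "length (v @ x @ y) < q"
  shows "\<exists>i. \<not> primitive (u @ word_pow i v @ x @ word_pow i y @ z)"
proof -
  define \<alpha> \<beta> where "\<alpha> = count_list (v @ y) Ga" "\<beta> = count_list (v @ y) Gb"
  have pos: "set (v @ y) \<subseteq> {Ga, Gb}" using set_witness[of q] assms(2) by auto
  have "\<beta> \<le> count_list (v @ x @ y) Gb" by (simp add: \<alpha>_\<beta>_def)
  also have "\<dots> \<le> 1"
    using witness_factor_count_Gb_le_1[of q u "v @ x @ y" z] assms(2,4) by (simp only: append_assoc)
  finally have "\<beta> \<le> 1" .
  have len: "\<alpha> + \<beta> = length (v @ y)"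
    using length_eq_count_list_add[OF pos] by (simp add: \<alpha>_\<beta>_def)
  have "0 < \<alpha> + \<beta>" "\<alpha> + \<beta> < q" using assms(3,4) unfolding len by simp_all
  then obtain j where j: "\<not> coprime (q * q + 1 + j * \<alpha>) (q + j * \<beta>)"
    by (rule pumped_exp_sums_not_coprime[OF assms(1) \<open>\<beta> \<le> 1\<close>])
  let ?w = "u @ word_pow (Suc j) v @ x @ word_pow (Suc j) y @ z"
  have pumped: "exp_sum g ?w = exp_sum g (witness q) + int j * exp_sum g (v @ y)" for g
    unfolding assms(2) by (rule exp_sum_pumped)
  have "exp_sum Ga (v @ y) = int \<alpha>" "exp_sum Gb (v @ y) = int \<beta>"
    unfolding \<alpha>_\<beta>_def by (rule exp_sum_positive[OF pos], simp)+
  then have ws: "exp_sum Ga ?w = int (q * q + 1 + j * \<alpha>)" "exp_sum Gb ?w = int (q + j * \<beta>)"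
    unfolding pumped exp_sum_witness by simp_all
  have "\<not> coprime (exp_sum Ga ?w) (exp_sum Gb ?w)"
    unfolding ws coprime_int_iff by (rule j)
  then show ?thesis using primitive_coprime_exp_sum by blast
qed

theorem mainTheorem13:
  shows "\<not> context_free primitive_reduced_words"
proof
  assume "context_free primitive_reduced_words"
  then obtain P S where fin: "finite P" and L: "primitive_reduced_words = cfg_lang P S"
    unfolding context_free_def by blast
  obtain p where pump: "\<And>w. w \<in> cfg_lang P S \<Longrightarrow> p < length w \<Longrightarrow>
    \<exists>u v x y z. w = u @ v @ x @ y @ z \<and> v @ y \<noteq> [] \<and> length (v @ x @ y) \<le> p \<and>
       (\<forall>i. u @ word_pow i v @ x @ word_pow i y @ z \<in> cfg_lang P S)"
    by (rule pumping_lemma[of P S, OF fin]) blast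
  obtain q :: nat where q: "prime q" "p < q" using bigger_prime by blast
  have "witness q \<in> primitive_reduced_words"
    by (simp add: primitive_reduced_words_def primitive_witness reduced_positive[OF set_witness])
  then have in_lang: "witness q \<in> cfg_lang P S" by (simp only: L)
  have "q \<le> length (witness q)" by (simp add: witness_def)
  then have long: "p < length (witness q)" using q(2) by linarith
  obtain u v x y z where dec: "witness q = u @ v @ x @ y @ z" "v @ y \<noteq> []" "length (v @ x @ y) \<le> p"
      and pumped: "\<forall>i. u @ word_pow i v @ x @ word_pow i y @ z \<in> cfg_lang P S"
    using pump[OF in_lang long] by blast
  have "length (v @ x @ y) < q" using dec(3) q(2) by linarith
  then obtain i where "\<not> primitive (u @ word_pow i v @ x @ word_pow i y @ z)"
    using witness_pumping_not_primitive[OF q(1) dec(1,2)] by blast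
  moreover have "u @ word_pow i v @ x @ word_pow i y @ z \<in> primitive_reduced_words"
    using pumped by (simp only: L)
  ultimately show False by (simp add: primitive_reduced_words_def)
qed

end
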